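(* Let $\mathbf{X}$ and $\mathbf{Y}$ be Euclidean spaces, and let $G\colon \mathbf{X}\to\mathbb{R}^n$, $P\colon\mathbf{X}\to\mathbb{R}^m$ and $H\colon\mathbf{X}\to\mathbf{Y}$ be maps, and set \[ M = \{x \in \mathbf{X} : G(x)\le 0,\ P(x)\le 0,\ H(x)=0\}. \] Let $\bar x \in \mathbf{X}$ and suppose that $G$, $P$, $H$ are $C^2$-smooth around $\bar x$, that $G(\bar x)=0$, $P(\bar x)<0$, $H(\bar x)=0$, and that the linear independence constraint qualification holds: for $w \in \mathbb{R}^n$, $y \in \mathbf{Y}$, $\nabla G(\bar x)^* w + \nabla H(\bar x)^* y = 0$ implies $w=0$ and $y=0$. For points $z \in \mathbf{X}$ near $\bar x$, let $\Phi(z)$ denote the unique optimal solution of the convex quadratic program \[ \begin{array}{ll} \text{minimize} & \tfrac12 |x-z|^2\\ \text{subject to} & G(z)+\nabla G(z)(x-z)\le 0,\\ & P(z)+\nabla P(z)(x-z)\le 0,\\ & H(z)+\nabla H(z)(x-z)=0,\\ & x\in\mathbf{X}. \end{array} \] Then $\Phi$ is an inexact projection onto $M$ around $\bar x$; more precisely, the nearest point $P_M(z)$ is unique for $z$ near $\bar x$ and \[ |\Phi(z)-P_M(z)| = O\big(d_M(z)^2\big) \quad \text{as } z\to\bar x. \]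
   Context: Inequalities between vectors in $\mathbb{R}^n$ or $\mathbb{R}^m$ are componentwise. $\nabla G(z)$, $\nabla H(z)$, $\nabla P(z)$ denote derivative linear maps and ${}^*$ denotes adjoint. $d_M(z)=\min\{|x-z|: x\in M\}$ and $P_M(z)$ is the set of nearest points of $M$ to $z$. For a closed set $M$ and $\bar x\in M$, a map $\Phi$ is an inexact projection onto $M$ around $\bar x$ if $d_{P_M(z)}(\Phi(z)) = o(d_M(z))$ as $z\to\bar x$. *)

theory Defs
  imports "HOL-Analysis.Analysis" "HOL-Library.Landau_Symbols"
begin

definition C2_near :: "('a::euclidean_space \<Rightarrow> 'b::euclidean_space) \<Rightarrow> 'a \<Rightarrow> bool" where
  "C2_near f x0 \<longleftrightarrow> (\<exists>U. open U \<and> x0 \<in> U \<and>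
     (\<exists>(Df :: 'a \<Rightarrow> ('a \<Rightarrow>\<^sub>L 'b)) (D2f :: 'a \<Rightarrow> ('a \<Rightarrow>\<^sub>L ('a \<Rightarrow>\<^sub>L 'b))).
        (\<forall>x\<in>U. (f has_derivative blinfun_apply (Df x)) (at x) \<and>
                (Df has_derivative blinfun_apply (D2f x)) (at x)) \<and>
        continuous_on U D2f))"

definition constr_set ::
  "('a::euclidean_space \<Rightarrow> real^'n) \<Rightarrow> ('a \<Rightarrow> real^'m) \<Rightarrow> ('a \<Rightarrow> 'c::euclidean_space) \<Rightarrow> 'a set" where
  "constr_set G P H = {x. G x \<le> 0 \<and> P x \<le> 0 \<and> H x = 0}"

definition nearest_points :: "'a::metric_space set \<Rightarrow> 'a \<Rightarrow> 'a set" where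
  "nearest_points M z = {x\<in>M. \<forall>y\<in>M. dist z x \<le> dist z y}"

definition qp_feasible ::
  "('a::euclidean_space \<Rightarrow> real^'n) \<Rightarrow> ('a \<Rightarrow> real^'m) \<Rightarrow> ('a \<Rightarrow> 'c::euclidean_space) \<Rightarrow> 'a \<Rightarrow> 'a \<Rightarrow> bool" where
  "qp_feasible G P H z x \<longleftrightarrow>
     G z + frechet_derivative G (at z) (x - z) \<le> 0 \<and>
     P z + frechet_derivative P (at z) (x - z) \<le> 0 \<and>
     H z + frechet_derivative H (at z) (x - z) = 0"

definition qp_optimal ::
  "('a::euclidean_space \<Rightarrow> real^'n) \<Rightarrow> ('a \<Rightarrow> real^'m) \<Rightarrow> ('a \<Rightarrow> 'c::euclidean_space) \<Rightarrow> 'a \<Rightarrow> 'a \<Rightarrow> bool" where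
  "qp_optimal G P H z x \<longleftrightarrow> qp_feasible G P H z x \<and>
     (\<forall>x'. qp_feasible G P H z x' \<longrightarrow> (1/2) * norm (x - z)^2 \<le> (1/2) * norm (x' - z)^2)"

text \<open>Phi(z): the (unique, near the reference point) optimal solution of the QP.\<close>
definition qp_Phi ::
  "('a::euclidean_space \<Rightarrow> real^'n) \<Rightarrow> ('a \<Rightarrow> real^'m) \<Rightarrow> ('a \<Rightarrow> 'c::euclidean_space) \<Rightarrow> 'a \<Rightarrow> 'a" where
  "qp_Phi G P H z = (THE x. qp_optimal G P H z x)"

definition inexact_projection :: "('a::euclidean_space \<Rightarrow> 'a) \<Rightarrow> 'a set \<Rightarrow> 'a \<Rightarrow> bool" where
  "inexact_projection Phi M x0 \<longleftrightarrow>
     (\<lambda>z. infdist (Phi z) (nearest_points M z)) \<in> o[at x0](\<lambda>z. infdist z M)"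

end

(* Near xbar the active constraints (G, H) are uniformly metrically regular: by LICQ the derivative
   of (G, H) at xbar has a bounded linear right inverse, and a Graves-type contraction argument
   transports it to nearby points and to the nonlinear map, while the P-constraints stay inactive.
   Consequently a nearest point p of z in M carries KKT multipliers of size O(|z - p|), which makes
   M prox-regular: (z - p) . (y - p) <= C |z - p| |y - p|^2 for y in M near xbar; this forces
   P_M(z) to be a singleton. Phi(z) is the projection of z onto the polyhedron obtained by
   linearizing at z. Transporting the KKT conditions at p to z costs O(|z - p|^2), and comparing
   them with the variational inequality characterising Phi(z) yields
   |Phi(z) - p| = O(|z - p|^2) = O(d_M(z)^2). *)

theory Submission
  imports Defs
begin

section \<open>Maps with bounded Lipschitz derivative\<close>

definition deriv_bounded_lipschitz_on ::
  "('a::real_normed_vector \<Rightarrow> 'b::real_normed_vector) \<Rightarrow> ('a \<Rightarrow> 'a \<Rightarrow> 'b) \<Rightarrow> 'a set \<Rightarrow> real \<Rightarrow> bool" where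
  "deriv_bounded_lipschitz_on f Df S B \<longleftrightarrow> 0 \<le> B \<and>
     (\<forall>x\<in>S. (f has_derivative Df x) (at x)) \<and>
     (\<forall>x\<in>S. \<forall>h. norm (Df x h) \<le> B * norm h) \<and>
     (\<forall>x\<in>S. \<forall>y\<in>S. \<forall>h. norm (Df x h - Df y h) \<le> B * norm (x - y) * norm h)"

context
  fixes f :: "'a::real_normed_vector \<Rightarrow> 'b::real_normed_vector" and Df S B
  assumes f: "deriv_bounded_lipschitz_on f Df S B"
begin

lemma deriv_bounded_lipschitz_onD:
  shows "0 \<le> B"
    and "x \<in> S \<Longrightarrow> (f has_derivative Df x) (at x)"
    and "x \<in> S \<Longrightarrow> norm (Df x h) \<le> B * norm h"
    and "x \<in> S \<Longrightarrow> y \<in> S \<Longrightarrow> norm (Df x h - Df y h) \<le> B * norm (x - y) * norm h"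
  using f unfolding deriv_bounded_lipschitz_on_def by blast+

lemma deriv_bounded_lipschitz_on_linear: "x \<in> S \<Longrightarrow> linear (Df x)"
  using deriv_bounded_lipschitz_onD(2) has_derivative_linear by blast

lemma deriv_bounded_lipschitz_on_mono:
  assumes "T \<subseteq> S" "B \<le> B'"
  shows "deriv_bounded_lipschitz_on f Df T B'"
proof -
  have "B * norm h \<le> B' * norm h" and "B * norm (x - y) * norm h \<le> B' * norm (x - y) * norm h" for x y :: 'a and h :: 'a
    using assms(2) by (simp_all add: mult_right_mono)
  then show ?thesis
    using assms deriv_bounded_lipschitz_onD unfolding deriv_bounded_lipschitz_on_def
    by (meson order_trans subsetD)
qed

lemma deriv_bounded_lipschitz_on_lipschitz:
  assumes "convex S" "a \<in> S" "b \<in> S"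
  shows "norm (f b - f a) \<le> B * norm (b - a)"
proof (rule differentiable_bound[OF assms(1) _ _ assms(3,2)])
  fix x assume x: "x \<in> S"
  then show "(f has_derivative Df x) (at x within S)"
    using deriv_bounded_lipschitz_onD(2) has_derivative_at_withinI by blast
  show "onorm (Df x) \<le> B"
    using x deriv_bounded_lipschitz_onD(1,3) by (simp add: onorm_bound)
qed

lemma deriv_bounded_lipschitz_on_taylor:
  assumes "convex S" "a \<in> S" "b \<in> S"
  shows "norm (f b - f a - Df a (b - a)) \<le> B * norm (b - a)^2"
proof -
  have seg: "closed_segment a b \<subseteq> S"
    using assms closed_segment_subset by blast
  have "norm (f b - f a - Df a (b - a)) \<le> norm (b - a) * (B * norm (b - a))"
  proof (rule differentiable_bound_linearization[where S = "closed_segment a b" and f' = Df])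
    fix t :: real assume "t \<in> {0..1}"
    then show "a + t *\<^sub>R (b - a) \<in> closed_segment a b"
      unfolding closed_segment_def by (auto intro!: exI[of _ t] simp: algebra_simps)
  next
    fix x assume x: "x \<in> closed_segment a b"
    show "(f has_derivative Df x) (at x within closed_segment a b)"
      using deriv_bounded_lipschitz_onD(2) seg x has_derivative_at_withinI by blast
    have "norm (Df x h - Df a h) \<le> (B * norm (b - a)) * norm h" for h
    proof -
      have "norm (Df x h - Df a h) \<le> B * norm (x - a) * norm h"
        using deriv_bounded_lipschitz_onD(4) seg x assms(2) by blast
      also have "\<dots> \<le> B * norm (b - a) * norm h"
        using segment_bound(1)[OF x] deriv_bounded_lipschitz_onD(1)
        by (intro mult_right_mono mult_left_mono) auto
      finally show ?thesis .
    qed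
    then show "onorm (Df x - Df a) \<le> B * norm (b - a)"
      using deriv_bounded_lipschitz_onD(1) by (simp add: onorm_bound fun_diff_def)
  qed simp
  then show ?thesis by (simp add: power2_eq_square algebra_simps)
qed

end

lemma C2_near_imp_lipschitz_blinfun_deriv:
  fixes f :: "'a::euclidean_space \<Rightarrow> 'b::euclidean_space"
  assumes "C2_near f x0"
  obtains r B Df where "r > 0"
    "\<And>x. x \<in> cball x0 r \<Longrightarrow> (f has_derivative blinfun_apply (Df x)) (at x)"
    "\<And>x. x \<in> cball x0 r \<Longrightarrow> norm (Df x) \<le> B"
    "\<And>a b. a \<in> cball x0 r \<Longrightarrow> b \<in> cball x0 r \<Longrightarrow> norm (Df a - Df b) \<le> B * norm (a - b)"
proof -
  obtain U Df D2f where U: "open U" "x0 \<in> U"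
    and d: "\<And>x. x\<in>U \<Longrightarrow> (f has_derivative blinfun_apply (Df x)) (at x) \<and>
                (Df has_derivative blinfun_apply (D2f x)) (at x)"
    and c: "continuous_on U D2f"
    using assms unfolding C2_near_def by blast
  obtain r where r: "r > 0" "cball x0 r \<subseteq> U"
    using U open_contains_cball by blast
  have "continuous_on (cball x0 r) Df"
    using d r(2) has_derivative_continuous by (meson continuous_at_imp_continuous_on subsetD)
  then have "bounded (Df ` cball x0 r)"
    by (rule compact_imp_bounded[OF compact_continuous_image[OF _ compact_cball]])
  then obtain B1 where B1: "\<And>x. x \<in> cball x0 r \<Longrightarrow> norm (Df x) \<le> B1"
    unfolding bounded_iff by blast
  have "bounded (D2f ` cball x0 r)"
    by (rule compact_imp_bounded[OF compact_continuous_image[OF continuous_on_subset[OF c r(2)] compact_cball]])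
  then obtain B2 where B2: "\<And>x. x \<in> cball x0 r \<Longrightarrow> norm (D2f x) \<le> B2"
    unfolding bounded_iff by blast
  have lip: "norm (Df a - Df b) \<le> max B1 B2 * norm (a - b)" if "a \<in> cball x0 r" "b \<in> cball x0 r" for a b
  proof (rule differentiable_bound[OF convex_cball _ _ that])
    fix x assume x: "x \<in> cball x0 r"
    show "(Df has_derivative blinfun_apply (D2f x)) (at x within cball x0 r)"
      using d[of x] x r has_derivative_at_withinI by blast
    show "onorm (blinfun_apply (D2f x)) \<le> max B1 B2"
      using B2[OF x] by (simp add: norm_blinfun.rep_eq le_max_iff_disj)
  qed
  have bound: "norm (Df x) \<le> max B1 B2" if "x \<in> cball x0 r" for x
    using B1[OF that] by (simp add: le_max_iff_disj)
  have deriv: "(f has_derivative blinfun_apply (Df x)) (at x)" if "x \<in> cball x0 r" for x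
    using d r(2) that by blast
  show ?thesis by (rule that[OF r(1) deriv bound lip])
qed

lemma C2_near_imp_deriv_bounded_lipschitz:
  fixes f :: "'a::euclidean_space \<Rightarrow> 'b::euclidean_space"
  assumes "C2_near f x0"
  obtains Df r B where "r > 0" "deriv_bounded_lipschitz_on f Df (cball x0 r) B"
proof -
  obtain r B Df where r: "r > 0"
    and d: "\<And>x. x \<in> cball x0 r \<Longrightarrow> (f has_derivative blinfun_apply (Df x)) (at x)"
    and bound: "\<And>x. x \<in> cball x0 r \<Longrightarrow> norm (Df x) \<le> B"
    and lip: "\<And>a b. a \<in> cball x0 r \<Longrightarrow> b \<in> cball x0 r \<Longrightarrow> norm (Df a - Df b) \<le> B * norm (a - b)"
    by (rule C2_near_imp_lipschitz_blinfun_deriv[OF assms]) blast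
  have "deriv_bounded_lipschitz_on f (\<lambda>x. blinfun_apply (Df x)) (cball x0 r) B"
    unfolding deriv_bounded_lipschitz_on_def
  proof (intro conjI ballI allI)
    show "0 \<le> B" using order_trans[OF norm_ge_zero bound[of x0]] r by simp
    fix x h assume x: "x \<in> cball x0 r"
    then show "(f has_derivative blinfun_apply (Df x)) (at x)" by (rule d)
    have "norm (Df x h) \<le> norm (Df x) * norm h" by (rule norm_blinfun)
    also have "\<dots> \<le> B * norm h" using bound[OF x] by (rule mult_right_mono) simp
    finally show "norm (Df x h) \<le> B * norm h" .
    fix y assume y: "y \<in> cball x0 r"
    have "norm (Df x h - Df y h) \<le> norm (Df x - Df y) * norm h"
      by (metis blinfun.diff_left norm_blinfun)
    also have "\<dots> \<le> B * norm (x - y) * norm h" using lip[OF x y] by (rule mult_right_mono) simp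
    finally show "norm (Df x h - Df y h) \<le> B * norm (x - y) * norm h" .
  qed
  with r that show ?thesis by blast
qed

lemma deriv_bounded_lipschitz_on_Pair:
  assumes f: "deriv_bounded_lipschitz_on f Df S B" and g: "deriv_bounded_lipschitz_on g Dg S C"
  shows "deriv_bounded_lipschitz_on (\<lambda>x. (f x, g x)) (\<lambda>x h. (Df x h, Dg x h)) S (B + C)"
  unfolding deriv_bounded_lipschitz_on_def
proof (intro conjI ballI allI)
  show "0 \<le> B + C" using deriv_bounded_lipschitz_onD(1)[OF f] deriv_bounded_lipschitz_onD(1)[OF g] by simp
  fix x h assume x: "x \<in> S"
  show "((\<lambda>x. (f x, g x)) has_derivative (\<lambda>h. (Df x h, Dg x h))) (at x)"
    by (rule has_derivative_Pair[OF deriv_bounded_lipschitz_onD(2)[OF f x] deriv_bounded_lipschitz_onD(2)[OF g x]])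
  have "norm (Df x h, Dg x h) \<le> norm (Df x h) + norm (Dg x h)" by (rule norm_Pair_le)
  also have "\<dots> \<le> (B + C) * norm h"
    using deriv_bounded_lipschitz_onD(3)[OF f x] deriv_bounded_lipschitz_onD(3)[OF g x]
    by (simp add: distrib_right add_mono)
  finally show "norm (Df x h, Dg x h) \<le> (B + C) * norm h" .
  fix y assume y: "y \<in> S"
  have "norm ((Df x h, Dg x h) - (Df y h, Dg y h)) \<le> norm (Df x h - Df y h) + norm (Dg x h - Dg y h)"
    using norm_Pair_le by simp
  also have "\<dots> \<le> (B + C) * norm (x - y) * norm h"
    using deriv_bounded_lipschitz_onD(4)[OF f x y] deriv_bounded_lipschitz_onD(4)[OF g x y]
    by (simp add: distrib_right add_mono)
  finally show "norm ((Df x h, Dg x h) - (Df y h, Dg y h)) \<le> (B + C) * norm (x - y) * norm h" .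
qed

section \<open>Solving equations near a surjective linearization\<close>

lemma right_inverse_newton_step_contracts:
  fixes F L :: "'a::real_normed_vector \<Rightarrow> 'w::real_normed_vector" and R :: "'w \<Rightarrow> 'a"
  assumes R: "linear R" "\<And>w. L (R w) = w" "\<And>w. norm (R w) \<le> \<kappa> * norm w" and \<kappa>: "\<kappa> > 0"
    and ab: "a - b = R v"
    and near: "norm (F a - F b - L (a - b)) \<le> norm (a - b) / (2 * \<kappa>)"
  shows "norm ((a - R (F a - c)) - (b - R (F b - c))) \<le> 1/2 * norm (a - b)"
proof -
  have "R (L (a - b)) = a - b" using ab R(2) by simp
  moreover have "R (F a - c) - R (F b - c) = R (F a - F b)"
    using R(1) by (simp add: linear_diff[symmetric])
  ultimately have "(a - R (F a - c)) - (b - R (F b - c)) = R (L (a - b)) - R (F a - F b)"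
    by (simp add: algebra_simps)
  also have "\<dots> = - R (F a - F b - L (a - b))"
    using R(1) by (simp add: linear_diff)
  finally have "norm ((a - R (F a - c)) - (b - R (F b - c))) \<le> \<kappa> * norm (F a - F b - L (a - b))"
    using R(3) by simp
  also have "\<dots> \<le> \<kappa> * (norm (a - b) / (2 * \<kappa>))"
    using near \<kappa> by (intro mult_left_mono) auto
  finally show ?thesis using \<kappa> by simp
qed

lemma graves_solution_exists:
  fixes F L :: "'a::euclidean_space \<Rightarrow> 'w::euclidean_space" and R :: "'w \<Rightarrow> 'a"
  assumes R: "linear R" "\<And>w. L (R w) = w" "\<And>w. norm (R w) \<le> \<kappa> * norm w"
    and L: "linear L" and \<kappa>: "\<kappa> > 0"
    and near_linear: "\<And>a b. a \<in> cball y0 \<rho> \<Longrightarrow> b \<in> cball y0 \<rho> \<Longrightarrow>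
       norm (F a - F b - L (a - b)) \<le> norm (a - b) / (2 * \<kappa>)"
    and c: "2 * \<kappa> * norm (c - F y0) \<le> \<rho>"
  shows "\<exists>y. F y = c \<and> norm (y - y0) \<le> 2 * \<kappa> * norm (c - F y0)"
proof -
  define \<rho>' where "\<rho>' = 2 * \<kappa> * norm (c - F y0)"
  define S where "S = {y. norm (y - y0) \<le> \<rho>' \<and> y - y0 \<in> range R}"
  \<comment> \<open>Newton's map with the frozen right inverse; it is a 1/2-contraction of S.\<close>
  define T where "T = (\<lambda>y. y - R (F y - c))"
  have "closed (range R)" by (rule closed_subspace[OF linear_subspace_image[OF R(1) subspace_UNIV]])
  then have "closed {y. y - y0 \<in> range R}"
    using continuous_closed_vimage[of "range R" "\<lambda>y. y - y0"] by (simp add: vimage_def)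
  then have "complete S"
    unfolding S_def complete_eq_closed by (intro closed_Collect_conj closed_Collect_le continuous_intros)
  have "0 \<in> range R" using linear_0[OF R(1)] by (metis rangeI)
  then have y0S: "y0 \<in> S" unfolding S_def \<rho>'_def using \<kappa> by simp
  have inc: "y \<in> cball y0 \<rho>" if "y \<in> S" for y
    using that c unfolding S_def \<rho>'_def by (simp add: dist_norm norm_minus_commute)
  have contraction: "dist (T a) (T b) \<le> 1/2 * dist a b" if a: "a \<in> S" and b: "b \<in> S" for a b
  proof -
    obtain u1 u2 where u: "a - y0 = R u1" "b - y0 = R u2" using a b unfolding S_def by blast
    have "a - b = (a - y0) - (b - y0)" by simp
    then have "a - b = R (u1 - u2)" using R(1) u by (simp add: linear_diff)
    then show ?thesis
      using right_inverse_newton_step_contracts[OF R \<kappa> _ near_linear[OF inc[OF a] inc[OF b]]]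
      unfolding T_def dist_norm by blast
  qed
  have maps: "T ` S \<subseteq> S"
  proof
    fix z assume "z \<in> T ` S"
    then obtain y where y: "y \<in> S" "z = T y" by blast
    obtain u where "y - y0 = R u" using y(1) unfolding S_def by blast
    then have "T y - y0 = R (u - (F y - c))" unfolding T_def using R(1) by (simp add: linear_diff)
    moreover have "norm (T y - y0) \<le> norm (T y - T y0) + norm (T y0 - y0)"
      using norm_triangle_ineq[of "T y - T y0" "T y0 - y0"] by simp
    moreover have "norm (T y - T y0) \<le> 1/2 * norm (y - y0)" "norm (T y0 - y0) \<le> \<kappa> * norm (c - F y0)"
      using contraction[OF y(1) y0S] R(3)[of "F y0 - c"] by (simp_all add: dist_norm T_def norm_minus_commute)
    ultimately show "z \<in> S" using y unfolding S_def \<rho>'_def by auto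
  qed
  have "\<exists>!y. y \<in> S \<and> T y = y"
    by (rule Banach_fix[OF \<open>complete S\<close>, of "1/2" T]) (use y0S maps contraction in auto)
  then obtain y where y: "y \<in> S" "T y = y" by blast
  then have "R (F y - c) = 0" unfolding T_def by simp
  then have "F y - c = 0" using R(2)[of "F y - c"] L by (simp add: linear_0)
  then show ?thesis using y(1) unfolding S_def \<rho>'_def by auto
qed

context
  fixes F :: "'a::euclidean_space \<Rightarrow> 'w::euclidean_space" and DF x0 r B and R :: "'w \<Rightarrow> 'a" and \<kappa>
  assumes F: "deriv_bounded_lipschitz_on F DF (cball x0 r) B"
    and R: "linear R" "\<And>w. DF x0 (R w) = w" "\<And>w. norm (R w) \<le> \<kappa> * norm w"
    and \<kappa>: "\<kappa> > 0"
begin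

lemma deriv_right_inverse_near:
  assumes small: "2 * B * \<kappa> * r \<le> 1" and a: "a \<in> cball x0 r"
  shows "\<exists>v. DF a v = w \<and> norm v \<le> 2 * \<kappa> * norm w"
proof -
  have x0: "x0 \<in> cball x0 r" using a by (auto intro: order_trans[OF zero_le_dist])
  have lin: "linear (DF a)" "linear (DF x0)"
    using deriv_bounded_lipschitz_on_linear[OF F] a x0 by auto
  have near: "norm (DF a h1 - DF a h2 - DF x0 (h1 - h2)) \<le> norm (h1 - h2) / (2 * \<kappa>)" for h1 h2
  proof -
    have "norm (DF a h1 - DF a h2 - DF x0 (h1 - h2)) = norm (DF a (h1 - h2) - DF x0 (h1 - h2))"
      using lin by (simp add: linear_diff)
    also have "\<dots> \<le> B * norm (a - x0) * norm (h1 - h2)"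
      using deriv_bounded_lipschitz_onD(4)[OF F a x0] .
    also have "\<dots> \<le> B * r * norm (h1 - h2)"
      using a deriv_bounded_lipschitz_onD(1)[OF F]
      by (intro mult_right_mono mult_left_mono) (auto simp: dist_norm norm_minus_commute)
    also have "\<dots> \<le> norm (h1 - h2) / (2 * \<kappa>)"
    proof -
      have "B * r \<le> 1 / (2 * \<kappa>)" using small \<kappa> by (simp add: field_simps)
      from mult_right_mono[OF this norm_ge_zero] show ?thesis by simp
    qed
    finally show ?thesis .
  qed
  have "\<exists>v. DF a v = w \<and> norm (v - 0) \<le> 2 * \<kappa> * norm (w - DF a 0)"
    by (rule graves_solution_exists[where L = "DF x0" and R = R and \<kappa> = \<kappa> and \<rho> = "2 * \<kappa> * norm w", OF R lin(2) \<kappa> near]) (use lin(1) in \<open>simp add: linear_0\<close>)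
  then show ?thesis using lin(1) by (simp add: linear_0)
qed

lemma local_solution_near:
  assumes small: "6 * B * \<kappa> * r \<le> 1"
    and ball: "cball y0 \<rho> \<subseteq> cball x0 r" and c: "2 * \<kappa> * norm (c - F y0) \<le> \<rho>"
  shows "\<exists>y. F y = c \<and> norm (y - y0) \<le> 2 * \<kappa> * norm (c - F y0)"
proof (rule graves_solution_exists[where F = F and L = "DF x0", OF R _ \<kappa> _ c])
  have "0 \<le> \<rho>" using c \<kappa> by (smt (verit) mult_nonneg_nonneg norm_ge_zero)
  then have "y0 \<in> cball x0 r" using ball centre_in_cball by blast
  then have x0: "x0 \<in> cball x0 r" by (metis centre_in_cball mem_cball order_trans zero_le_dist)
  then show "linear (DF x0)" by (rule deriv_bounded_lipschitz_on_linear[OF F])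
  fix a b assume "a \<in> cball y0 \<rho>" "b \<in> cball y0 \<rho>"
  with ball have a: "a \<in> cball x0 r" and b: "b \<in> cball x0 r" by auto
  then have "norm (b - x0) \<le> r" "norm (a - b) \<le> 2 * r"
    using dist_triangle[of a b x0] by (auto simp: dist_norm norm_minus_commute)
  have "norm (F a - F b - DF x0 (a - b))
      \<le> norm (F a - F b - DF b (a - b)) + norm (DF b (a - b) - DF x0 (a - b))"
    using norm_triangle_ineq[of "F a - F b - DF b (a - b)" "DF b (a - b) - DF x0 (a - b)"] by simp
  also have "\<dots> \<le> B * norm (a - b)^2 + B * norm (b - x0) * norm (a - b)"
    using deriv_bounded_lipschitz_on_taylor[OF F convex_cball b a] deriv_bounded_lipschitz_onD(4)[OF F b x0]
    by (intro add_mono)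
  also have "\<dots> \<le> B * (2 * r * norm (a - b)) + B * r * norm (a - b)"
    using \<open>norm (b - x0) \<le> r\<close> \<open>norm (a - b) \<le> 2 * r\<close> deriv_bounded_lipschitz_onD(1)[OF F]
    by (intro add_mono mult_left_mono mult_right_mono) (auto simp: power2_eq_square mult_right_mono)
  also have "\<dots> = (3 * B * r) * norm (a - b)" by (simp add: algebra_simps)
  also have "\<dots> \<le> norm (a - b) / (2 * \<kappa>)"
  proof -
    have "3 * B * r \<le> 1 / (2 * \<kappa>)" using small \<kappa> by (simp add: field_simps)
    from mult_right_mono[OF this norm_ge_zero] show ?thesis by simp
  qed
  finally show "norm (F a - F b - DF x0 (a - b)) \<le> norm (a - b) / (2 * \<kappa>)" .
qed

end

lemma linear_right_inverse_of_adjoint_injective: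
  fixes f :: "'a::euclidean_space \<Rightarrow> 'c::euclidean_space" and g :: "'a \<Rightarrow> 'd::euclidean_space"
  assumes lf: "linear f" and lg: "linear g"
    and inj: "\<forall>w y. adjoint f w + adjoint g y = 0 \<longrightarrow> w = 0 \<and> y = 0"
  obtains R \<kappa> where "linear R" "\<And>w. (f (R w), g (R w)) = w" "\<kappa> > 0" "\<And>w. norm (R w) \<le> \<kappa> * norm w"
proof -
  let ?L = "\<lambda>x. (f x, g x)"
  have lL: "linear ?L"
    using lf lg by (intro linearI) (simp_all add: linear_add linear_scale)
  have "surj ?L"
  proof (rule ccontr)
    assume "\<not> surj ?L"
    moreover have span: "span (range ?L) = range ?L"
      by (rule span_eq_iff[THEN iffD2, OF linear_subspace_image[OF lL subspace_UNIV]])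
    ultimately have sub: "span (range ?L) \<subset> span UNIV" unfolding span span_UNIV by auto
    obtain z where z: "z \<noteq> 0" "z \<in> span UNIV" "\<And>y. y \<in> span (range ?L) \<Longrightarrow> orthogonal z y"
      using orthogonal_to_subspace_exists_gen[OF sub] by blast
    obtain w y where zw: "z = (w, y)" by (cases z)
    define x where "x = adjoint f w + adjoint g y"
    have "x \<bullet> x = x \<bullet> (adjoint f w + adjoint g y)" by (simp add: x_def)
    also have "\<dots> = f x \<bullet> w + g x \<bullet> y"
      using adjoint_works[OF lf, of x w] adjoint_works[OF lg, of x y] by (simp add: inner_add_right)
    also have "\<dots> = 0"
      using z(3)[OF span_base[OF rangeI[of ?L x]]] zw unfolding orthogonal_def by (simp add: inner_commute)
    finally have "w = 0 \<and> y = 0" using inj x_def by simp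
    then show False using z(1) zw by (simp add: zero_prod_def)
  qed
  then obtain R where R: "linear R" "?L \<circ> R = id"
    using linear_surjective_right_inverse[OF lL] by blast
  have "(f (R w), g (R w)) = w" for w using fun_cong[OF R(2), of w] by simp
  moreover obtain \<kappa> where "\<kappa> > 0" "\<And>w. norm (R w) \<le> \<kappa> * norm w"
    using linear_bounded_pos[OF R(1)] by blast
  ultimately show ?thesis using that R(1) by blast
qed

section \<open>Nearest points, normal cones and multipliers\<close>

lemma separating_hyperplane_closed_cone:
  fixes K :: "'a::euclidean_space set"
  assumes "closed K" "convex K" "0 \<in> K" "\<And>x t. x \<in> K \<Longrightarrow> t > 0 \<Longrightarrow> t *\<^sub>R x \<in> K" "g \<notin> K"
  obtains a where "\<forall>x\<in>K. a \<bullet> x \<le> 0" "a \<bullet> g > 0"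
proof -
  obtain a b where ab: "a \<bullet> g < b" "\<And>x. x \<in> K \<Longrightarrow> b < a \<bullet> x"
    using separating_hyperplane_closed_point[OF assms(2,1,5)] by blast
  have b0: "b < 0" using ab(2)[OF assms(3)] by simp
  have "- a \<bullet> x \<le> 0" if "x \<in> K" for x
  proof (rule ccontr)
    assume "\<not> - a \<bullet> x \<le> 0"
    then have pos: "a \<bullet> x < 0" by simp
    then have "b / (a \<bullet> x) > 0" using b0 by (simp add: divide_neg_neg)
    then have "b < a \<bullet> ((b / (a \<bullet> x)) *\<^sub>R x)" using ab(2) assms(4) that by blast
    with pos show False by simp
  qed
  moreover have "- a \<bullet> g > 0" using ab(1) b0 by simp
  ultimately show ?thesis using that by blast
qed

lemma linear_inj_adjoint_pair:
  fixes A :: "'a::euclidean_space \<Rightarrow> 'c::euclidean_space" and C :: "'a \<Rightarrow> 'd::euclidean_space"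
  assumes lA: "linear A" and lC: "linear C" and onto: "\<And>u w. \<exists>v. A v = u \<and> C v = w"
  shows "linear (\<lambda>x. adjoint A (fst x) + adjoint C (snd x))" (is "linear ?T")
    and "inj (\<lambda>x. adjoint A (fst x) + adjoint C (snd x))"
proof -
  show lT: "linear ?T"
    by (intro linear_compose_add linear_compose[OF linear_fst, unfolded o_def]
        linear_compose[OF linear_snd, unfolded o_def] adjoint_linear lA lC)
  show "inj ?T"
    unfolding linear_injective_0[OF lT]
  proof (intro allI impI)
    fix x assume T0: "?T x = 0"
    obtain l m where x: "x = (l, m)" by (cases x)
    obtain v where "A v = l" "C v = m" using onto by blast
    then have "l \<bullet> l + m \<bullet> m = v \<bullet> ?T x"
      unfolding x using adjoint_works[OF lA] adjoint_works[OF lC] by (simp add: inner_add_right inner_commute)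
    then have "l \<bullet> l + m \<bullet> m = 0" using T0 by simp
    then have "l = 0" "m = 0"
      by (metis add_nonneg_eq_0_iff inner_eq_zero_iff inner_ge_zero)+
    then show "x = 0" using x by (simp add: zero_prod_def)
  qed
qed

lemma closed_convex_complementary_cone:
  fixes s :: "real^'n"
  defines "K \<equiv> {x::(real^'n) \<times> 'b::real_normed_vector. \<forall>i. 0 \<le> fst x $ i \<and> fst x $ i * s $ i = 0}"
  shows "closed K" and "convex K"
proof -
  show "closed K"
    unfolding K_def
    by (intro closed_Collect_all closed_Collect_conj closed_Collect_le closed_Collect_eq continuous_intros)
  show "convex K"
    unfolding K_def convex_def
    by (auto simp: algebra_simps) (metis add.right_neutral mult_zero_right)
qed

lemma farkas_alternative:
  fixes A :: "'a::euclidean_space \<Rightarrow> real^'n" and C :: "'a \<Rightarrow> 'b::euclidean_space"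
    and s :: "real^'n"
  assumes lA: "linear A" and lC: "linear C" and onto: "\<And>u w. \<exists>v. A v = u \<and> C v = w"
  obtains l m where "\<forall>i. 0 \<le> l$i" "\<forall>i. l$i * s$i = 0" "\<forall>h. g \<bullet> h = l \<bullet> A h + m \<bullet> C h"
    | h where "\<forall>i. s$i = 0 \<longrightarrow> A h $ i \<le> 0" "C h = 0" "g \<bullet> h > 0"
proof -
  define T where "T = (\<lambda>x::(real^'n) \<times> 'b. adjoint A (fst x) + adjoint C (snd x))"
  define K where "K = {x::(real^'n) \<times> 'b. \<forall>i. 0 \<le> fst x $ i \<and> fst x $ i * s $ i = 0}"
  have T_inner: "h \<bullet> T (l, m) = l \<bullet> A h + m \<bullet> C h" for h l m
    unfolding T_def using adjoint_works[OF lA] adjoint_works[OF lC]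
    by (simp add: inner_add_right inner_commute)
  have lT: "linear T" and "inj T"
    using linear_inj_adjoint_pair[OF lA lC onto] unfolding T_def by auto
  have cl: "closed (T ` K)" and cv: "convex (T ` K)"
    using closed_injective_linear_image[OF _ lT \<open>inj T\<close>] convex_linear_image[OF lT]
      closed_convex_complementary_cone[of s] unfolding K_def by auto
  show thesis
  proof (cases "g \<in> T ` K")
    case True
    then obtain l m where "(l, m) \<in> K" "g = T (l, m)" by auto
    then show thesis using that(1)[of l m] T_inner unfolding K_def by (simp add: inner_commute)
  next
    case False
    have "0 \<in> K" unfolding K_def by simp
    then have zero: "0 \<in> T ` K" using linear_0[OF lT] by (metis image_eqI)
    have cone: "t *\<^sub>R y \<in> T ` K" if y: "y \<in> T ` K" and t: "t > 0" for y t
    proof -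
      obtain x where x: "x \<in> K" "y = T x" using y by blast
      then have "t *\<^sub>R x \<in> K" using t unfolding K_def by (simp add: mult.assoc)
      moreover have "T (t *\<^sub>R x) = t *\<^sub>R y" using lT x(2) by (simp add: linear_scale)
      ultimately show ?thesis by (metis image_eqI)
    qed
    obtain a where a: "\<forall>y\<in>T ` K. a \<bullet> y \<le> 0" "a \<bullet> g > 0"
      using separating_hyperplane_closed_cone[OF cl cv zero cone False] by blast
    show thesis
    proof (rule that(2)[of a])
      show "\<forall>i. s$i = 0 \<longrightarrow> A a $ i \<le> 0"
      proof (intro allI impI)
        fix i assume "s$i = 0"
        then have "(axis i 1, 0) \<in> K" unfolding K_def by (auto simp: axis_def)
        then have "a \<bullet> T (axis i 1, 0) \<le> 0" using a(1) by blast
        then show "A a $ i \<le> 0" unfolding T_inner by (simp add: inner_axis')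
      qed
      have "(0, C a) \<in> K" unfolding K_def by simp
      then have "a \<bullet> T (0, C a) \<le> 0" using a(1) by blast
      then have "C a \<bullet> C a \<le> 0" unfolding T_inner by simp
      then show "C a = 0" by (metis inner_ge_zero inner_eq_zero_iff order_antisym)
    qed (use a(2) in \<open>simp add: inner_commute\<close>)
  qed
qed

lemma nearest_point_inner_tangent_le:
  fixes M :: "'a::real_inner set"
  assumes p: "p \<in> nearest_points M z"
    and tangent: "\<forall>\<^sub>F t in at_right 0. \<exists>y\<in>M. norm (y - (p + t *\<^sub>R h)) \<le> K * t^2"
  shows "(z - p) \<bullet> h \<le> 0"
proof (rule ccontr)
  assume "\<not> (z - p) \<bullet> h \<le> 0"
  then have \<beta>: "(z - p) \<bullet> h > 0" by simp
  define \<phi> where "\<phi> t = 2 * norm (z - p) * K * t + t * (norm h + K * t)^2" for t :: real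
  have "(\<phi> \<longlongrightarrow> \<phi> 0) (at_right 0)"
    unfolding \<phi>_def by (intro tendsto_intros)
  moreover have "\<phi> 0 < 2 * ((z - p) \<bullet> h)" using \<beta> by (simp add: \<phi>_def)
  ultimately have small: "\<forall>\<^sub>F t in at_right 0. \<phi> t < 2 * ((z - p) \<bullet> h)"
    by (rule order_tendstoD(2))
  have "\<forall>\<^sub>F t::real in at_right 0. False"
    using tangent small eventually_at_right_less[of 0]
  proof eventually_elim
    case (elim t)
    then obtain y where y: "y \<in> M" and e: "norm (y - (p + t *\<^sub>R h)) \<le> K * t^2" and t: "t > 0"
      by blast
    define e where "e = y - (p + t *\<^sub>R h)"
    have "norm (z - p)^2 \<le> norm (z - y)^2"
      using p y unfolding nearest_points_def by (simp add: dist_norm power_mono)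
    also have "z - y = (z - p) - (t *\<^sub>R h + e)" unfolding e_def by simp
    finally have "2 * ((z - p) \<bullet> (t *\<^sub>R h + e)) \<le> norm (t *\<^sub>R h + e)^2"
      by (simp add: power2_norm_eq_inner inner_diff_left inner_diff_right inner_commute)
    moreover have "- ((z - p) \<bullet> e) \<le> norm (z - p) * (K * t^2)"
      using Cauchy_Schwarz_ineq2[of "z - p" e] e unfolding e_def
      by (smt (verit) mult_left_mono norm_ge_zero)
    moreover have "norm (t *\<^sub>R h + e)^2 \<le> (t * norm h + K * t^2)^2"
      using norm_triangle_ineq[of "t *\<^sub>R h" e] e t unfolding e_def
      by (intro power_mono) auto
    ultimately have "2 * t * ((z - p) \<bullet> h) \<le> t * \<phi> t"
      unfolding \<phi>_def by (simp add: power2_eq_square algebra_simps)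
    then show False using elim t by (simp add: mult_le_cancel_left_pos)
  qed
  then show False by simp
qed

lemma infdist_nearest_point:
  assumes "p \<in> nearest_points M z"
  shows "infdist z M = dist z p"
proof (rule antisym)
  show "infdist z M \<le> dist z p" using assms infdist_le unfolding nearest_points_def by blast
  show "dist z p \<le> infdist z M"
    using assms unfolding nearest_points_def infdist_def by (auto intro!: cINF_greatest)
qed

lemma inexact_projection_of_quadratic_estimate:
  fixes \<Phi> :: "'a::euclidean_space \<Rightarrow> 'a"
  assumes est: "\<forall>\<^sub>F z in nhds x0. \<exists>p. nearest_points M z = {p} \<and>
     norm (\<Phi> z - p) \<le> C * (infdist z M)^2 \<and> infdist z M \<le> norm (z - x0)"
  shows "inexact_projection \<Phi> M x0"
    and "(\<lambda>z. norm (\<Phi> z - (THE p. p \<in> nearest_points M z))) \<in> O[at x0](\<lambda>z. (infdist z M)^2)"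
proof -
  have single: "(THE p. p \<in> nearest_points M z) = p" "infdist (\<Phi> z) (nearest_points M z) = norm (\<Phi> z - p)"
    if "nearest_points M z = {p}" for z p
    using that by (simp_all add: dist_norm)
  show "inexact_projection \<Phi> M x0"
    unfolding inexact_projection_def
  proof (rule landau_o.smallI)
    fix c :: real assume "c > 0"
    then have "\<forall>\<^sub>F z in nhds x0. \<bar>C\<bar> * norm (z - x0) \<le> c"
      unfolding eventually_nhds_metric
      by (intro exI[of _ "c / (\<bar>C\<bar> + 1)"])
        (auto simp: dist_norm field_simps intro: order_trans[OF mult_right_mono[of _ "\<bar>C\<bar> + 1"]])
    with est have "\<forall>\<^sub>F z in nhds x0. norm (infdist (\<Phi> z) (nearest_points M z)) \<le> c * norm (infdist z M)"
    proof eventually_elim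
      case (elim z)
      then obtain p where p: "nearest_points M z = {p}" "norm (\<Phi> z - p) \<le> C * (infdist z M)^2"
        "infdist z M \<le> norm (z - x0)" by blast
      have "C * (infdist z M)^2 \<le> \<bar>C\<bar> * infdist z M * infdist z M"
        by (simp add: power2_eq_square mult.assoc mult_right_mono)
      also have "\<dots> \<le> (\<bar>C\<bar> * norm (z - x0)) * infdist z M"
        using p(3) infdist_nonneg by (intro mult_right_mono mult_left_mono) auto
      also have "\<dots> \<le> c * infdist z M" using elim(2) infdist_nonneg by (rule mult_right_mono)
      finally have "norm (\<Phi> z - p) \<le> c * infdist z M" using p(2) by linarith
      then show ?case using single(2)[OF p(1)] infdist_nonneg[of z M] by simp
    qed
    then show "\<forall>\<^sub>F z in at x0. norm (infdist (\<Phi> z) (nearest_points M z)) \<le> c * norm (infdist z M)"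
      unfolding eventually_at_filter by (rule eventually_mono) simp
  qed
  show "(\<lambda>z. norm (\<Phi> z - (THE p. p \<in> nearest_points M z))) \<in> O[at x0](\<lambda>z. (infdist z M)^2)"
  proof (rule bigoI)
    show "\<forall>\<^sub>F z in at x0. norm (norm (\<Phi> z - (THE p. p \<in> nearest_points M z))) \<le> C * norm ((infdist z M)^2)"
      using est unfolding eventually_at_filter by (rule eventually_mono) (auto simp: single)
  qed
qed

lemma eventually_nonpos_along_direction:
  fixes s d :: "real^'n"
  assumes "s \<le> 0" and "\<forall>i. s $ i = 0 \<longrightarrow> d $ i \<le> 0"
  shows "\<forall>\<^sub>F t in at_right 0. s + t *\<^sub>R d \<le> 0"
  unfolding less_eq_vec_def
proof (rule eventually_all_finite)
  fix i
  show "\<forall>\<^sub>F t in at_right 0. (s + t *\<^sub>R d) $ i \<le> 0 $ i"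
  proof (cases "s $ i = 0")
    case True
    then show ?thesis using assms(2) eventually_at_right_less[of 0]
      by (auto elim!: eventually_mono simp: mult_nonneg_nonpos)
  next
    case False
    then have "s $ i + 0 * d $ i < 0" using assms(1) by (simp add: less_eq_vec_def order_less_le)
    moreover have "((\<lambda>t. s $ i + t * d $ i) \<longlongrightarrow> s $ i + 0 * d $ i) (at_right 0)"
      by (intro tendsto_intros)
    ultimately show ?thesis by (auto dest: order_tendstoD(2) elim!: eventually_mono)
  qed
qed

lemma inner_nonneg_nonpos:
  fixes l u :: "real^'n"
  assumes "\<forall>i. 0 \<le> l$i" "\<forall>i. u$i \<le> 0"
  shows "l \<bullet> u \<le> 0"
  unfolding inner_vec_def using assms by (auto intro!: sum_nonpos simp: mult_nonneg_nonpos)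

lemma inner_complementary_zero:
  fixes l u :: "real^'n"
  assumes "\<forall>i. l$i * u$i = 0"
  shows "l \<bullet> u = 0"
  unfolding inner_vec_def by (rule sum.neutral) (use assms in simp)

section \<open>The constraint system near xbar\<close>

lemma uniformly_negative_near:
  fixes P :: "'a::metric_space \<Rightarrow> real^'m"
  assumes "isCont P x0" "\<forall>i. P x0 $ i < 0"
  obtains \<delta> d where "\<delta> > 0" "d > 0" "\<And>x i. x \<in> cball x0 d \<Longrightarrow> P x $ i \<le> - \<delta>"
proof -
  define \<delta> where "\<delta> = Min (range (\<lambda>i. - P x0 $ i)) / 2"
  have "Min (range (\<lambda>i. - P x0 $ i)) \<in> range (\<lambda>i. - P x0 $ i)" by (intro Min_in) auto
  then have \<delta>: "\<delta> > 0" unfolding \<delta>_def using assms(2) by auto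
  have P: "(P \<longlongrightarrow> P x0) (nhds x0)"
    using assms(1) by (simp add: isCont_def tendsto_at_iff_tendsto_nhds)
  have "\<forall>\<^sub>F x in nhds x0. \<forall>i. P x $ i < - \<delta>"
  proof (rule eventually_all_finite)
    fix i
    have "Min (range (\<lambda>i. - P x0 $ i)) \<le> - P x0 $ i" by (rule Min_le) auto
    then have "\<delta> < - P x0 $ i" using \<delta> unfolding \<delta>_def by linarith
    then show "\<forall>\<^sub>F x in nhds x0. P x $ i < - \<delta>"
      using order_tendstoD(2)[OF tendsto_vec_nth[OF P], of i "- \<delta>"] by simp
  qed
  then obtain d where d: "d > 0" "\<And>x i. dist x x0 < d \<Longrightarrow> P x $ i < - \<delta>"
    unfolding eventually_nhds_metric by blast
  have "P x $ i \<le> - \<delta>" if "x \<in> cball x0 (d/2)" for x i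
    using that d by (intro less_imp_le d(2)) (simp add: dist_commute)
  moreover have "d/2 > 0" using d(1) by simp
  ultimately show ?thesis using that[OF \<delta>] by blast
qed

text \<open>B bounds the derivatives and their Lipschitz constants, \<kappa> is a uniform constant of metric
  regularity for the pair (G, H), and the inactive constraints P stay below -\<delta>.\<close>
locale regular_constraint_system =
  fixes G :: "'a::euclidean_space \<Rightarrow> real^'n" and P :: "'a \<Rightarrow> real^'m" and H :: "'a \<Rightarrow> 'b::euclidean_space"
    and xbar :: 'a
    and DG :: "'a \<Rightarrow> 'a \<Rightarrow> real^'n" and DP :: "'a \<Rightarrow> 'a \<Rightarrow> real^'m" and DH :: "'a \<Rightarrow> 'a \<Rightarrow> 'b"
    and r B \<kappa> \<delta> :: real
  assumes r_pos: "r > 0" and B_pos: "B > 0" and \<kappa>_pos: "\<kappa> > 0" and \<delta>_pos: "\<delta> > 0"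
    and G_smooth: "deriv_bounded_lipschitz_on G DG (cball xbar r) B"
    and P_smooth: "deriv_bounded_lipschitz_on P DP (cball xbar r) B"
    and H_smooth: "deriv_bounded_lipschitz_on H DH (cball xbar r) B"
    and G_xbar: "G xbar = 0" and H_xbar: "H xbar = 0"
    and P_neg: "\<And>x i. x \<in> cball xbar r \<Longrightarrow> P x $ i \<le> - \<delta>"
    and right_inverse: "\<And>a u w. a \<in> cball xbar r \<Longrightarrow>
       \<exists>v. DG a v = u \<and> DH a v = w \<and> norm v \<le> \<kappa> * (norm u + norm w)"
    and local_solution: "\<And>y0 u c. norm (y0 - xbar) \<le> 3 * r / 4 \<Longrightarrow>
       \<kappa> * (norm (u - G y0) + norm (c - H y0)) \<le> r / 8 \<Longrightarrow>
       \<exists>y. G y = u \<and> H y = c \<and> norm (y - y0) \<le> \<kappa> * (norm (u - G y0) + norm (c - H y0))"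
begin

abbreviation "M \<equiv> constr_set G P H"

lemma mem_cball_xbar: "x \<in> cball xbar r \<longleftrightarrow> norm (x - xbar) \<le> r"
  by (simp add: dist_norm norm_minus_commute)

lemma DG_linear: "x \<in> cball xbar r \<Longrightarrow> linear (DG x)"
  and DH_linear: "x \<in> cball xbar r \<Longrightarrow> linear (DH x)"
  using deriv_bounded_lipschitz_on_linear G_smooth H_smooth by blast+

lemma G_taylor: "a \<in> cball xbar r \<Longrightarrow> b \<in> cball xbar r \<Longrightarrow> norm (G b - G a - DG a (b - a)) \<le> B * norm (b - a)^2"
  and H_taylor: "a \<in> cball xbar r \<Longrightarrow> b \<in> cball xbar r \<Longrightarrow> norm (H b - H a - DH a (b - a)) \<le> B * norm (b - a)^2"
  using deriv_bounded_lipschitz_on_taylor[OF _ convex_cball] G_smooth H_smooth by blast+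

lemma xbar_mem_M: "xbar \<in> M"
  using P_neg[of xbar] r_pos \<delta>_pos G_xbar H_xbar
  unfolding constr_set_def by (auto simp: less_eq_vec_def intro: order_trans[of _ "- \<delta>"])

lemma closed_M_Int_cball: "closed (M \<inter> cball xbar r)"
proof -
  have "continuous_on (cball xbar r) (\<lambda>x. (G x, P x, H x))"
  proof (intro continuous_at_imp_continuous_on ballI continuous_Pair)
    fix x assume "x \<in> cball xbar r"
    then show "isCont G x" "isCont P x" "isCont H x"
      using G_smooth P_smooth H_smooth by (meson deriv_bounded_lipschitz_onD(2) has_derivative_continuous)+
  qed
  then have "closed (cball xbar r \<inter> (\<lambda>x. (G x, P x, H x)) -` ({..0} \<times> {..0} \<times> {0}))"
    by (intro continuous_closed_preimage) (auto intro!: closed_Times)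
  moreover have "cball xbar r \<inter> (\<lambda>x. (G x, P x, H x)) -` ({..0} \<times> {..0} \<times> {0}) = M \<inter> cball xbar r"
    unfolding constr_set_def by auto
  ultimately show ?thesis by simp
qed

lemma nearest_point_exists:
  assumes "norm (z - xbar) \<le> r/2"
  obtains p where "p \<in> nearest_points M z"
proof -
  have "M \<inter> cball xbar r \<noteq> {}" using xbar_mem_M r_pos by auto
  then obtain p where p: "p \<in> M \<inter> cball xbar r" "\<And>y. y \<in> M \<inter> cball xbar r \<Longrightarrow> dist z p \<le> dist z y"
    using distance_attains_inf[OF closed_M_Int_cball] by metis
  have "dist z p \<le> dist z y" if "y \<in> M" for y
  proof (cases "y \<in> cball xbar r")
    case False
    have "dist z p \<le> dist z xbar" using p(2)[of xbar] xbar_mem_M r_pos by auto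
    also have "\<dots> \<le> dist z y"
      using False assms dist_triangle[of xbar y z] by (simp add: dist_norm norm_minus_commute dist_commute)
    finally show ?thesis .
  qed (use p that in auto)
  then show ?thesis using p(1) that unfolding nearest_points_def by auto
qed

lemma nearest_point_close:
  assumes "p \<in> nearest_points M z"
  shows "norm (z - p) \<le> norm (z - xbar)" "norm (p - xbar) \<le> 2 * norm (z - xbar)"
proof -
  show *: "norm (z - p) \<le> norm (z - xbar)"
    using assms xbar_mem_M unfolding nearest_points_def by (auto simp: dist_norm)
  have "norm (p - xbar) \<le> norm (z - p) + norm (z - xbar)"
    using norm_triangle_ineq4[of "z - xbar" "z - p"] by (simp add: add.commute)
  with * show "norm (p - xbar) \<le> 2 * norm (z - xbar)" by simp
qed

lemma feasible_point_near:
  assumes y0: "norm (y0 - xbar) \<le> 3 * r / 4" and u: "u \<le> 0"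
    and small: "\<kappa> * (norm (u - G y0) + norm (H y0)) \<le> r / 8"
  obtains y where "y \<in> M" "norm (y - y0) \<le> \<kappa> * (norm (u - G y0) + norm (H y0))"
proof -
  have "\<exists>y. G y = u \<and> H y = 0 \<and> norm (y - y0) \<le> \<kappa> * (norm (u - G y0) + norm (H y0))"
    using local_solution[OF y0, of u 0] small by simp
  then obtain y where y: "G y = u" "H y = 0" "norm (y - y0) \<le> \<kappa> * (norm (u - G y0) + norm (H y0))"
    by blast
  have "norm (y - xbar) \<le> norm (y - y0) + norm (y0 - xbar)"
    using norm_triangle_ineq[of "y - y0" "y0 - xbar"] by simp
  also have "\<dots> \<le> r" using y(3) small y0 r_pos by linarith
  finally have "y \<in> cball xbar r" unfolding mem_cball_xbar .
  then have "y \<in> M"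
    using y u P_neg \<delta>_pos unfolding constr_set_def
    by (auto simp: less_eq_vec_def intro: order_trans[of _ "- \<delta>"])
  with y(3) that show ?thesis by blast
qed

lemma feasible_arc:
  assumes pM: "p \<in> M" and pb: "norm (p - xbar) \<le> r/2"
    and active: "\<forall>i. G p $ i = 0 \<longrightarrow> DG p h $ i \<le> 0" and tangent: "DH p h = 0"
  shows "\<forall>\<^sub>F t in at_right 0. \<exists>y\<in>M. norm (y - (p + t *\<^sub>R h)) \<le> (2 * \<kappa> * B * norm h^2) * t^2"
proof -
  have pc: "p \<in> cball xbar r" using pb r_pos mem_cball_xbar by simp
  have Gp: "G p \<le> 0" and Hp: "H p = 0"
    using pM unfolding constr_set_def by auto
  have lin_dir: "\<forall>\<^sub>F t in at_right 0. G p + t *\<^sub>R DG p h \<le> 0"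
    using eventually_nonpos_along_direction Gp active by blast
  have "((\<lambda>t. t * norm h) \<longlongrightarrow> 0) (at_right 0)" "((\<lambda>t. \<kappa> * (2 * B * t^2 * norm h^2)) \<longlongrightarrow> 0) (at_right 0)"
    by (auto intro!: tendsto_eq_intros)
  then have short: "\<forall>\<^sub>F t in at_right 0. t * norm h < r/4 \<and> \<kappa> * (2 * B * t^2 * norm h^2) < r/8"
    using r_pos by (intro eventually_conj order_tendstoD(2)) auto
  show ?thesis
    using lin_dir short eventually_at_right_less[of 0]
  proof eventually_elim
    case (elim t)
    then have t: "t > 0" "t * norm h \<le> r/4" "\<kappa> * (2 * B * t^2 * norm h^2) \<le> r/8" by auto
    define y0 where "y0 = p + t *\<^sub>R h"
    define u where "u = G p + t *\<^sub>R DG p h"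
    have "norm (y0 - xbar) \<le> norm (p - xbar) + norm (t *\<^sub>R h)"
      unfolding y0_def using norm_triangle_ineq[of "p - xbar" "t *\<^sub>R h"] by (simp add: algebra_simps)
    then have y0b: "norm (y0 - xbar) \<le> 3 * r / 4" using pb t by simp
    then have y0c: "y0 \<in> cball xbar r" using r_pos mem_cball_xbar by simp
    have step: "norm (y0 - p) = t * norm h" unfolding y0_def using t by simp
    have "norm (u - G y0) = norm (G y0 - G p - DG p (y0 - p))"
      unfolding u_def y0_def using DG_linear[OF pc] by (simp add: linear_scale norm_minus_commute algebra_simps)
    also have "\<dots> \<le> B * t^2 * norm h^2" using G_taylor[OF pc y0c] step by (simp add: power_mult_distrib)
    finally have eG: "norm (u - G y0) \<le> B * t^2 * norm h^2" .
    have "norm (H y0) = norm (H y0 - H p - DH p (y0 - p))"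
      unfolding y0_def using DH_linear[OF pc] Hp tangent by (simp add: linear_scale)
    also have "\<dots> \<le> B * t^2 * norm h^2" using H_taylor[OF pc y0c] step by (simp add: power_mult_distrib)
    finally have eH: "norm (H y0) \<le> B * t^2 * norm h^2" .
    have err: "\<kappa> * (norm (u - G y0) + norm (H y0)) \<le> \<kappa> * (2 * B * t^2 * norm h^2)"
      using eG eH \<kappa>_pos by (intro mult_left_mono) auto
    have "u \<le> 0" using elim unfolding u_def by simp
    moreover have "\<kappa> * (norm (u - G y0) + norm (H y0)) \<le> r / 8" using err t(3) by linarith
    ultimately obtain y where yM: "y \<in> M" and close: "norm (y - y0) \<le> \<kappa> * (norm (u - G y0) + norm (H y0))"
      by (rule feasible_point_near[OF y0b])
    have "norm (y - (p + t *\<^sub>R h)) \<le> (2 * \<kappa> * B * norm h^2) * t^2"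
      using close err unfolding y0_def by (simp add: algebra_simps)
    with yM show ?case by blast
  qed
qed

lemma kkt_at_nearest_point:
  assumes pn: "p \<in> nearest_points M z" and pb: "norm (p - xbar) \<le> r/2"
  obtains l m where "\<forall>i. 0 \<le> l$i" "\<forall>i. l$i * G p $ i = 0" "\<forall>h. (z - p) \<bullet> h = l \<bullet> DG p h + m \<bullet> DH p h"
proof -
  have pc: "p \<in> cball xbar r" using pb r_pos mem_cball_xbar by simp
  have pM: "p \<in> M" using pn unfolding nearest_points_def by simp
  have onto: "\<exists>v. DG p v = u \<and> DH p v = w" for u w using right_inverse[OF pc] by blast
  show thesis
  proof (rule farkas_alternative[OF DG_linear[OF pc] DH_linear[OF pc] onto, of "G p" "z - p"])
    fix h assume h: "\<forall>i. G p $ i = 0 \<longrightarrow> DG p h $ i \<le> 0" "DH p h = 0" "(z - p) \<bullet> h > 0"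
    have "(z - p) \<bullet> h \<le> 0"
      by (rule nearest_point_inner_tangent_le[OF pn feasible_arc[OF pM pb h(1,2)]])
    with h(3) show thesis by simp
  qed (rule that)
qed

lemma multiplier_bound:
  assumes pc: "p \<in> cball xbar r" and lm: "\<forall>h. (z - p) \<bullet> h = l \<bullet> DG p h + m \<bullet> DH p h"
  shows "norm l + norm m \<le> 2 * \<kappa> * norm (z - p)"
proof -
  obtain v where v: "DG p v = l" "DH p v = m" "norm v \<le> \<kappa> * (norm l + norm m)"
    using right_inverse[OF pc] by blast
  have "(norm l + norm m)^2 / 2 \<le> norm l ^2 + norm m ^2"
    using zero_le_power2[of "norm l - norm m"] by (simp add: power2_eq_square field_simps)
  also have "\<dots> = (z - p) \<bullet> v" using lm v by (simp add: power2_norm_eq_inner)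
  also have "\<dots> \<le> norm (z - p) * norm v" by (rule norm_cauchy_schwarz)
  also have "\<dots> \<le> norm (z - p) * (\<kappa> * (norm l + norm m))" using v(3) by (simp add: mult_left_mono)
  finally have *: "(norm l + norm m) * (norm l + norm m) \<le> (norm l + norm m) * (2 * \<kappa> * norm (z - p))"
    by (simp add: power2_eq_square algebra_simps)
  show ?thesis
  proof (cases "norm l + norm m = 0")
    case False
    then have "norm l + norm m > 0" by (simp add: add_pos_nonneg order_less_le)
    with * show ?thesis by (simp add: mult_le_cancel_left_pos)
  qed (use \<kappa>_pos in simp)
qed

text \<open>Prox-regularity of M near xbar: M is convex up to a second-order error.\<close>
lemma nearest_point_hypomonotone:
  assumes pn: "p \<in> nearest_points M z" and pb: "norm (p - xbar) \<le> r/2"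
    and yM: "y \<in> M" and yc: "y \<in> cball xbar r"
  shows "(z - p) \<bullet> (y - p) \<le> 2 * \<kappa> * B * norm (z - p) * norm (y - p)^2"
proof -
  have pc: "p \<in> cball xbar r" using pb r_pos mem_cball_xbar by simp
  obtain l m where lm: "\<forall>i. 0 \<le> l$i" "\<forall>i. l$i * G p $ i = 0" "\<forall>h. (z - p) \<bullet> h = l \<bullet> DG p h + m \<bullet> DH p h"
    using kkt_at_nearest_point[OF pn pb] by blast
  have pM: "p \<in> M" using pn unfolding nearest_points_def by auto
  have Gy: "\<forall>i. G y $ i \<le> 0" and Hy: "H y = 0" and Hp: "H p = 0"
    using yM pM unfolding constr_set_def by (auto simp: less_eq_vec_def)
  define eG where "eG = G y - G p - DG p (y - p)"
  define eH where "eH = H y - H p - DH p (y - p)"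
  have "(z - p) \<bullet> (y - p) = l \<bullet> DG p (y - p) + m \<bullet> DH p (y - p)" using lm(3) by blast
  also have "\<dots> = l \<bullet> G y - l \<bullet> G p - l \<bullet> eG - m \<bullet> eH"
    unfolding eG_def eH_def Hy Hp by (simp add: inner_diff_right)
  also have "\<dots> \<le> norm l * norm eG + norm m * norm eH"
    using inner_nonneg_nonpos[OF lm(1) Gy] inner_complementary_zero[OF lm(2)]
      Cauchy_Schwarz_ineq2[of l eG] Cauchy_Schwarz_ineq2[of m eH] by linarith
  also have "\<dots> \<le> (norm l + norm m) * (B * norm (y - p)^2)"
    using G_taylor[OF pc yc] H_taylor[OF pc yc] unfolding eG_def eH_def distrib_right
    by (intro add_mono mult_left_mono) auto
  also have "\<dots> \<le> (2 * \<kappa> * norm (z - p)) * (B * norm (y - p)^2)"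
    using multiplier_bound[OF pc lm(3)] B_pos by (intro mult_right_mono) auto
  finally show ?thesis by (simp add: algebra_simps)
qed

lemma nearest_point_unique:
  assumes zb: "norm (z - xbar) \<le> r/4" and small: "4 * \<kappa> * B * norm (z - xbar) < 1"
    and p1: "p1 \<in> nearest_points M z" and p2: "p2 \<in> nearest_points M z"
  shows "p1 = p2"
proof -
  have b: "norm (p1 - xbar) \<le> r/2" "norm (p2 - xbar) \<le> r/2"
    using nearest_point_close(2)[OF p1] nearest_point_close(2)[OF p2] zb by simp_all
  then have c: "p1 \<in> cball xbar r" "p2 \<in> cball xbar r" using r_pos mem_cball_xbar by simp_all
  have M: "p1 \<in> M" "p2 \<in> M" using p1 p2 unfolding nearest_points_def by auto
  have "(z - p1) \<bullet> (p2 - p1) \<le> 2 * \<kappa> * B * norm (z - p1) * norm (p2 - p1)^2"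
    by (rule nearest_point_hypomonotone[OF p1 b(1) M(2) c(2)])
  also have "\<dots> \<le> 2 * \<kappa> * B * norm (z - xbar) * norm (p2 - p1)^2"
    using nearest_point_close(1)[OF p1] \<kappa>_pos B_pos by (intro mult_right_mono mult_left_mono) auto
  finally have h1: "(z - p1) \<bullet> (p2 - p1) \<le> 2 * \<kappa> * B * norm (z - xbar) * norm (p2 - p1)^2" .
  have "(z - p2) \<bullet> (p1 - p2) \<le> 2 * \<kappa> * B * norm (z - p2) * norm (p1 - p2)^2"
    by (rule nearest_point_hypomonotone[OF p2 b(2) M(1) c(1)])
  also have "\<dots> \<le> 2 * \<kappa> * B * norm (z - xbar) * norm (p2 - p1)^2"
    using nearest_point_close(1)[OF p2] \<kappa>_pos B_pos
    by (simp only: norm_minus_commute[of p1]) (intro mult_right_mono mult_left_mono, auto)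
  finally have h2: "(z - p2) \<bullet> (p1 - p2) \<le> 2 * \<kappa> * B * norm (z - xbar) * norm (p2 - p1)^2" .
  have "norm (p2 - p1)^2 = (z - p1) \<bullet> (p2 - p1) + (z - p2) \<bullet> (p1 - p2)"
    by (simp add: power2_norm_eq_inner algebra_simps inner_commute)
  also have "\<dots> \<le> (4 * \<kappa> * B * norm (z - xbar)) * norm (p2 - p1)^2" using h1 h2 by simp
  finally have "(1 - 4 * \<kappa> * B * norm (z - xbar)) * norm (p2 - p1)^2 \<le> 0" by (simp add: algebra_simps)
  then show ?thesis using small by (simp add: mult_le_0_iff)
qed

text \<open>The QP without its P-constraints, which are inactive near xbar.\<close>
definition linearized_set :: "'a \<Rightarrow> 'a set" where
  "linearized_set z = {y. G z + DG z (y - z) \<le> 0 \<and> H z + DH z (y - z) = 0}"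

lemma closed_linearized_set:
  assumes zc: "z \<in> cball xbar r"
  shows "closed (linearized_set z)"
proof -
  have bl: "bounded_linear (DG z)" "bounded_linear (DH z)"
    using G_smooth H_smooth zc by (meson deriv_bounded_lipschitz_onD(2) has_derivative_bounded_linear)+
  then have "continuous_on UNIV (\<lambda>y. (G z + DG z (y - z), H z + DH z (y - z)))"
    by (intro continuous_intros bounded_linear.continuous_on[OF bl(1)] bounded_linear.continuous_on[OF bl(2)])
  then have "closed (UNIV \<inter> (\<lambda>y. (G z + DG z (y - z), H z + DH z (y - z))) -` ({..0} \<times> {0}))"
    by (intro continuous_closed_preimage) (auto intro!: closed_Times)
  moreover have "UNIV \<inter> (\<lambda>y. (G z + DG z (y - z), H z + DH z (y - z))) -` ({..0} \<times> {0}) = linearized_set z"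
    unfolding linearized_set_def by auto
  ultimately show ?thesis by simp
qed

lemma convex_linearized_set:
  assumes zc: "z \<in> cball xbar r"
  shows "convex (linearized_set z)"
  unfolding convex_def
proof (intro ballI allI impI)
  fix x y and u v :: real
  assume x: "x \<in> linearized_set z" and y: "y \<in> linearized_set z" and uv: "0 \<le> u" "0 \<le> v" "u + v = 1"
  have shift: "u *\<^sub>R x + v *\<^sub>R y - z = u *\<^sub>R (x - z) + v *\<^sub>R (y - z)"
    using uv(3) by (simp add: algebra_simps flip: scaleR_add_left)
  have "G z + DG z (u *\<^sub>R x + v *\<^sub>R y - z) = (u + v) *\<^sub>R G z + (u *\<^sub>R DG z (x - z) + v *\<^sub>R DG z (y - z))"
    unfolding shift using DG_linear[OF zc] uv(3) by (simp add: linear_add linear_scale)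
  also have "\<dots> = u *\<^sub>R (G z + DG z (x - z)) + v *\<^sub>R (G z + DG z (y - z))"
    by (simp add: algebra_simps)
  also have "\<dots> \<le> 0"
  proof -
    have "u *\<^sub>R a + v *\<^sub>R b \<le> 0" if "a \<le> 0" "b \<le> (0::real^'n)" for a b
      using that uv(1,2) by (auto simp: less_eq_vec_def intro!: add_nonpos_nonpos mult_nonneg_nonpos)
    then show ?thesis using x y unfolding linearized_set_def by simp
  qed
  finally have "G z + DG z (u *\<^sub>R x + v *\<^sub>R y - z) \<le> 0" .
  moreover have "H z + DH z (u *\<^sub>R x + v *\<^sub>R y - z) = (u + v) *\<^sub>R H z + (u *\<^sub>R DH z (x - z) + v *\<^sub>R DH z (y - z))"
    unfolding shift using DH_linear[OF zc] uv(3) by (simp add: linear_add linear_scale)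
  moreover have "\<dots> = u *\<^sub>R (H z + DH z (x - z)) + v *\<^sub>R (H z + DH z (y - z))"
    by (simp add: algebra_simps)
  ultimately show "u *\<^sub>R x + v *\<^sub>R y \<in> linearized_set z"
    using x y unfolding linearized_set_def by simp
qed

lemma qp_feasible_iff:
  assumes zc: "z \<in> cball xbar r"
  shows "qp_feasible G P H z y \<longleftrightarrow> y \<in> linearized_set z \<and> P z + DP z (y - z) \<le> 0"
  using frechet_derivative_at[OF deriv_bounded_lipschitz_onD(2)[OF G_smooth zc]]
    frechet_derivative_at[OF deriv_bounded_lipschitz_onD(2)[OF P_smooth zc]]
    frechet_derivative_at[OF deriv_bounded_lipschitz_onD(2)[OF H_smooth zc]]
  unfolding qp_feasible_def linearized_set_def by auto

lemma qp_optimal_iff_closest_point: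
  assumes zc: "z \<in> cball xbar r" and zd: "2 * \<kappa> * B * B * norm (z - xbar) \<le> \<delta>"
  shows "qp_optimal G P H z x \<longleftrightarrow> x = closest_point (linearized_set z) z"
proof -
  let ?S = "linearized_set z" and ?c = "closest_point (linearized_set z) z"
  have xc: "xbar \<in> cball xbar r" using r_pos by simp
  obtain v where v: "DG z v = - G z" "DH z v = - H z" "norm v \<le> \<kappa> * (norm (- G z) + norm (- H z))"
    using right_inverse[OF zc] by blast
  have "z + v \<in> ?S" unfolding linearized_set_def using v by simp
  then have ne: "?S \<noteq> {}" by blast
  have c: "?c \<in> ?S" by (rule closest_point_in_set[OF closed_linearized_set[OF zc] ne])
  have c_le: "norm (?c - z) \<le> norm (y - z)" if "y \<in> ?S" for y
    using closest_point_le[OF closed_linearized_set[OF zc] that, of z]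
    by (simp add: dist_norm norm_minus_commute)
  have Gz: "norm (G z) \<le> B * norm (z - xbar)" and Hz: "norm (H z) \<le> B * norm (z - xbar)"
    using deriv_bounded_lipschitz_on_lipschitz[OF G_smooth convex_cball xc zc]
      deriv_bounded_lipschitz_on_lipschitz[OF H_smooth convex_cball xc zc] G_xbar H_xbar by simp_all
  have "norm (?c - z) \<le> norm v" using c_le[OF \<open>z + v \<in> ?S\<close>] by simp
  also have "\<dots> \<le> \<kappa> * (B * norm (z - xbar) + B * norm (z - xbar))"
    using v(3) Gz Hz \<kappa>_pos by (smt (verit) mult_left_mono norm_minus_cancel)
  finally have "B * norm (?c - z) \<le> B * (2 * \<kappa> * B * norm (z - xbar))"
    using B_pos by (simp add: algebra_simps)
  then have "B * norm (?c - z) \<le> \<delta>" using zd by (simp add: algebra_simps)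
  then have "P z $ i + DP z (?c - z) $ i \<le> 0" for i
    using P_neg[OF zc, of i] component_le_norm_cart[of "DP z (?c - z)" i]
      deriv_bounded_lipschitz_onD(3)[OF P_smooth zc, of "?c - z"] by linarith
  then have c_feasible: "qp_feasible G P H z ?c"
    using qp_feasible_iff[OF zc] c by (simp add: less_eq_vec_def)
  have "qp_optimal G P H z ?c"
    unfolding qp_optimal_def
  proof (intro conjI c_feasible allI impI)
    fix x' assume "qp_feasible G P H z x'"
    then have "norm (?c - z) \<le> norm (x' - z)" using c_le qp_feasible_iff[OF zc] by blast
    then show "1/2 * norm (?c - z)^2 \<le> 1/2 * norm (x' - z)^2" by (simp add: power_mono)
  qed
  moreover have "x = ?c" if "qp_optimal G P H z x"
  proof (rule closest_point_unique[OF convex_linearized_set[OF zc] closed_linearized_set[OF zc]])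
    have "qp_feasible G P H z x" "norm (x - z)^2 \<le> norm (?c - z)^2"
      using that c_feasible unfolding qp_optimal_def by auto
    then have "x \<in> ?S" "norm (x - z) \<le> norm (?c - z)"
      using qp_feasible_iff[OF zc] power2_le_imp_le by auto
    then show "x \<in> ?S" "\<forall>y\<in>?S. dist z x \<le> dist z y"
      using c_le by (auto simp: dist_norm norm_minus_commute intro: order_trans)
  qed
  ultimately show ?thesis by blast
qed

lemma linearized_copy_of_feasible_point:
  assumes zc: "z \<in> cball xbar r" and pc: "p \<in> cball xbar r" and pM: "p \<in> M"
  obtains q where "q \<in> linearized_set z" "G z + DG z (q - z) = G p"
    "norm (q - p) \<le> 2 * \<kappa> * B * norm (z - p)^2"
proof -
  have Gp: "G p \<le> 0" and Hp: "H p = 0" using pM unfolding constr_set_def by auto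
  define eG where "eG = G z + DG z (p - z) - G p"
  define eH where "eH = H z + DH z (p - z)"
  have "norm eG \<le> B * norm (z - p)^2"
    using G_taylor[OF zc pc] unfolding eG_def by (simp add: norm_minus_commute algebra_simps)
  moreover have "norm eH \<le> B * norm (z - p)^2"
    using H_taylor[OF zc pc] unfolding eH_def by (metis Hp diff_0 diff_diff_eq norm_minus_cancel norm_minus_commute)
  moreover obtain v where v: "DG z v = eG" "DH z v = eH" "norm v \<le> \<kappa> * (norm eG + norm eH)"
    using right_inverse[OF zc] by blast
  ultimately have "norm v \<le> \<kappa> * (B * norm (z - p)^2 + B * norm (z - p)^2)"
    using \<kappa>_pos by (meson add_mono less_imp_le mult_left_mono order_trans)
  then have "norm v \<le> 2 * \<kappa> * B * norm (z - p)^2" by (simp add: algebra_simps)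
  moreover have "G z + DG z ((p - v) - z) = G p" "H z + DH z ((p - v) - z) = 0"
    using DG_linear[OF zc] DH_linear[OF zc] v(1,2) unfolding eG_def eH_def
    by (simp_all add: linear_diff linear_add algebra_simps)
  ultimately show ?thesis
    using that[of "p - v"] Gp unfolding linearized_set_def by simp
qed

lemma inner_adjoint_multipliers:
  assumes "z \<in> cball xbar r"
  shows "(adjoint (DG z) l + adjoint (DH z) m) \<bullet> h = l \<bullet> DG z h + m \<bullet> DH z h"
proof -
  have "(adjoint (DG z) l + adjoint (DH z) m) \<bullet> h = adjoint (DG z) l \<bullet> h + adjoint (DH z) m \<bullet> h"
    by (rule inner_add_left)
  also have "\<dots> = l \<bullet> DG z h + m \<bullet> DH z h"
    using adjoint_works[OF DG_linear[OF assms], of h l] adjoint_works[OF DH_linear[OF assms], of h m]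
    by (simp add: inner_commute)
  finally show ?thesis .
qed

lemma linearized_normal_near:
  assumes zc: "z \<in> cball xbar r" and pc: "p \<in> cball xbar r"
    and lm: "\<forall>h. (z - p) \<bullet> h = l \<bullet> DG p h + m \<bullet> DH p h"
  shows "norm (adjoint (DG z) l + adjoint (DH z) m - (z - p)) \<le> 2 * \<kappa> * B * norm (z - p)^2"
proof -
  define n where "n = adjoint (DG z) l + adjoint (DH z) m"
  define u where "u = n - (z - p)"
  have "norm u ^2 = n \<bullet> u - (z - p) \<bullet> u"
    by (simp add: power2_norm_eq_inner inner_diff_left[symmetric] flip: u_def)
  also have "\<dots> = l \<bullet> (DG z u - DG p u) + m \<bullet> (DH z u - DH p u)"
    using inner_adjoint_multipliers[OF zc, of l m u] lm unfolding n_def by (simp add: inner_diff_right)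
  also have "\<dots> \<le> norm l * (B * norm (z - p) * norm u) + norm m * (B * norm (z - p) * norm u)"
    using norm_cauchy_schwarz[of l "DG z u - DG p u"] norm_cauchy_schwarz[of m "DH z u - DH p u"]
      deriv_bounded_lipschitz_onD(4)[OF G_smooth zc pc, of u] deriv_bounded_lipschitz_onD(4)[OF H_smooth zc pc, of u]
    by (smt (verit) mult_left_mono norm_ge_zero)
  also have "\<dots> = (norm l + norm m) * (B * norm (z - p)) * norm u" by (simp add: algebra_simps)
  also have "\<dots> \<le> (2 * \<kappa> * norm (z - p)) * (B * norm (z - p)) * norm u"
    using multiplier_bound[OF pc lm] B_pos by (intro mult_right_mono) auto
  finally have "norm u * norm u \<le> (2 * \<kappa> * B * norm (z - p)^2) * norm u"
    by (simp add: power2_eq_square algebra_simps)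
  then show ?thesis
    using B_pos \<kappa>_pos unfolding u_def n_def by (cases "norm u = 0") (auto simp: u_def n_def mult_le_cancel_right)
qed

lemma adjoint_multipliers_normal:
  assumes zc: "z \<in> cball xbar r" and l: "\<forall>i. 0 \<le> l$i" "\<forall>i. l$i * s$i = 0"
    and q: "q \<in> linearized_set z" "G z + DG z (q - z) = s" and y: "y \<in> linearized_set z"
  shows "(adjoint (DG z) l + adjoint (DH z) m) \<bullet> (y - q) \<le> 0"
proof -
  have "(adjoint (DG z) l + adjoint (DH z) m) \<bullet> (y - q) = l \<bullet> DG z (y - q) + m \<bullet> DH z (y - q)"
    by (rule inner_adjoint_multipliers[OF zc])
  also have "DG z (y - q) = (G z + DG z (y - z)) - s"
    using q(2) DG_linear[OF zc] by (simp add: linear_diff algebra_simps)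
  also have "DH z (y - q) = (H z + DH z (y - z)) - (H z + DH z (q - z))"
    using DH_linear[OF zc] by (simp add: linear_diff)
  also have "\<dots> = 0" using q(1) y unfolding linearized_set_def by simp
  finally have "(adjoint (DG z) l + adjoint (DH z) m) \<bullet> (y - q) = l \<bullet> (G z + DG z (y - z)) - l \<bullet> s"
    by (simp add: inner_diff_right)
  moreover have "l \<bullet> (G z + DG z (y - z)) \<le> 0"
    using inner_nonneg_nonpos[OF l(1)] y unfolding linearized_set_def by (simp add: less_eq_vec_def)
  ultimately show ?thesis using inner_complementary_zero[OF l(2)] by simp
qed

lemma closest_linearized_point_near_nearest:
  assumes zb: "norm (z - xbar) \<le> r/4" and pn: "p \<in> nearest_points M z"
  shows "norm (closest_point (linearized_set z) z - p) \<le> 6 * \<kappa> * B * norm (z - p)^2"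
proof -
  let ?S = "linearized_set z" and ?x = "closest_point (linearized_set z) z"
  define d where "d = norm (z - p)"
  have zc: "z \<in> cball xbar r" using zb r_pos mem_cball_xbar by simp
  have pb: "norm (p - xbar) \<le> r/2" using nearest_point_close(2)[OF pn] zb by simp
  then have pc: "p \<in> cball xbar r" using r_pos mem_cball_xbar by simp
  have pM: "p \<in> M" using pn unfolding nearest_points_def by auto
  obtain l m where lm: "\<forall>i. 0 \<le> l$i" "\<forall>i. l$i * G p $ i = 0" "\<forall>h. (z - p) \<bullet> h = l \<bullet> DG p h + m \<bullet> DH p h"
    using kkt_at_nearest_point[OF pn pb] by blast
  obtain q where q: "q \<in> ?S" "G z + DG z (q - z) = G p" "norm (q - p) \<le> 2 * \<kappa> * B * d^2"
    using linearized_copy_of_feasible_point[OF zc pc pM] unfolding d_def by blast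
  define n where "n = adjoint (DG z) l + adjoint (DH z) m"
  have n_near: "norm (n - (z - p)) \<le> 2 * \<kappa> * B * d^2"
    using linearized_normal_near[OF zc pc lm(3)] unfolding n_def d_def .
  have n_normal: "n \<bullet> (y - q) \<le> 0" if "y \<in> ?S" for y
    unfolding n_def by (rule adjoint_multipliers_normal[OF zc lm(1,2) q(1,2) that])
  have "?x \<in> ?S" using closest_point_exists(1)[OF closed_linearized_set[OF zc]] q(1) by blast
  have "norm (q - ?x)^2 = (z - ?x) \<bullet> (q - ?x) + n \<bullet> (?x - q) + (n - (z - q)) \<bullet> (q - ?x)"
    by (simp add: power2_norm_eq_inner algebra_simps inner_commute)
  also have "\<dots> \<le> (n - (z - q)) \<bullet> (q - ?x)"
    using closest_point_dot[OF convex_linearized_set[OF zc] closed_linearized_set[OF zc] q(1), of z]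
      n_normal[OF \<open>?x \<in> ?S\<close>] by linarith
  also have "\<dots> \<le> norm (n - (z - q)) * norm (q - ?x)" by (rule norm_cauchy_schwarz)
  finally have "norm (q - ?x) \<le> norm (n - (z - q))"
    by (cases "norm (q - ?x) = 0") (auto simp: power2_eq_square mult_le_cancel_right)
  also have "\<dots> \<le> norm (n - (z - p)) + norm (q - p)"
    using norm_triangle_ineq[of "n - (z - p)" "q - p"] by (simp add: algebra_simps)
  finally have "norm (q - ?x) \<le> 4 * \<kappa> * B * d^2" using n_near q(3) by simp
  then have "norm (?x - p) \<le> 4 * \<kappa> * B * d^2 + 2 * \<kappa> * B * d^2"
    using q(3) norm_triangle_ineq4[of "?x - q" "p - q"] by (simp add: norm_minus_commute algebra_simps)
  then show ?thesis unfolding d_def by (simp add: algebra_simps)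
qed

lemma local_quadratic_estimate:
  "\<forall>\<^sub>F z in nhds xbar. \<exists>p. nearest_points M z = {p} \<and> (\<exists>!x. qp_optimal G P H z x) \<and>
     norm (qp_Phi G P H z - p) \<le> 6 * \<kappa> * B * (infdist z M)^2 \<and> infdist z M \<le> norm (z - xbar)"
proof -
  define \<epsilon> where "\<epsilon> = min (r/4) (min (\<delta> / (2 * \<kappa> * B * B)) (1 / (8 * \<kappa> * B)))"
  have "\<epsilon> > 0" unfolding \<epsilon>_def using r_pos \<delta>_pos \<kappa>_pos B_pos by auto
  then have "\<forall>\<^sub>F z in nhds xbar. norm (z - xbar) \<le> \<epsilon>"
    unfolding eventually_nhds_metric by (auto simp: dist_norm intro!: exI[of _ \<epsilon>])
  then show ?thesis
  proof (rule eventually_mono)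
    fix z assume z\<epsilon>: "norm (z - xbar) \<le> \<epsilon>"
    then have zb: "norm (z - xbar) \<le> r/4" unfolding \<epsilon>_def by simp
    then have zc: "z \<in> cball xbar r" using r_pos mem_cball_xbar by simp
    have "norm (z - xbar) \<le> \<delta> / (2 * \<kappa> * B * B)" "norm (z - xbar) \<le> 1 / (8 * \<kappa> * B)"
      using z\<epsilon> unfolding \<epsilon>_def by simp_all
    then have zd: "2 * \<kappa> * B * B * norm (z - xbar) \<le> \<delta>" and small: "4 * \<kappa> * B * norm (z - xbar) < 1"
      using \<kappa>_pos B_pos by (simp_all add: field_simps)
    let ?x = "closest_point (linearized_set z) z"
    have ex1: "\<exists>!x. qp_optimal G P H z x" using qp_optimal_iff_closest_point[OF zc zd] by simp
    have Phi: "qp_Phi G P H z = ?x"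
      unfolding qp_Phi_def by (rule the1_equality[OF ex1]) (simp add: qp_optimal_iff_closest_point[OF zc zd])
    obtain p where pn: "p \<in> nearest_points M z"
      using nearest_point_exists[of z] zb r_pos by fastforce
    have "nearest_points M z = {p}" using nearest_point_unique[OF zb small pn] pn by blast
    moreover have "infdist z M = norm (z - p)" using infdist_nearest_point[OF pn] by (simp add: dist_norm)
    ultimately show "\<exists>p. nearest_points M z = {p} \<and> (\<exists>!x. qp_optimal G P H z x) \<and>
        norm (qp_Phi G P H z - p) \<le> 6 * \<kappa> * B * (infdist z M)^2 \<and> infdist z M \<le> norm (z - xbar)"
      using ex1 Phi closest_linearized_point_near_nearest[OF zb pn] nearest_point_close(1)[OF pn] by auto
  qed
qed

end

lemma regular_constraint_system_of_right_inverse: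
  fixes G :: "'a::euclidean_space \<Rightarrow> real^'n" and P :: "'a \<Rightarrow> real^'m" and H :: "'a \<Rightarrow> 'b::euclidean_space"
  assumes r: "r > 0" and B: "B > 0" and \<delta>: "\<delta> > 0"
    and G: "deriv_bounded_lipschitz_on G DG (cball xbar r) B"
    and P: "deriv_bounded_lipschitz_on P DP (cball xbar r) B"
    and H: "deriv_bounded_lipschitz_on H DH (cball xbar r) B"
    and "G xbar = 0" "H xbar = 0" and "\<And>x i. x \<in> cball xbar r \<Longrightarrow> P x $ i \<le> - \<delta>"
    and R: "linear R" "\<And>w. (DG xbar (R w), DH xbar (R w)) = w" "\<And>w. norm (R w) \<le> \<kappa> * norm w"
    and \<kappa>: "\<kappa> > 0" and small: "12 * B * \<kappa> * r \<le> 1"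
  shows "regular_constraint_system G P H xbar DG DP DH r B (2 * \<kappa>) \<delta>"
proof -
  let ?F = "\<lambda>x. (G x, H x)" and ?DF = "\<lambda>x h. (DG x h, DH x h)"
  have F: "deriv_bounded_lipschitz_on ?F ?DF (cball xbar r) (B + B)"
    by (rule deriv_bounded_lipschitz_on_Pair[OF G H])
  have small': "6 * (B + B) * \<kappa> * r \<le> 1" using small by simp
  show ?thesis
  proof unfold_locales
    fix a u w assume a: "a \<in> cball xbar r"
    have "2 * (B + B) * \<kappa> * r \<le> 1" using small' B \<kappa> r by simp
    then obtain v where "?DF a v = (u, w)" "norm v \<le> 2 * \<kappa> * norm (u, w)"
      using deriv_right_inverse_near[OF F R \<kappa> _ a] by blast
    then show "\<exists>v. DG a v = u \<and> DH a v = w \<and> norm v \<le> 2 * \<kappa> * (norm u + norm w)"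
      using norm_Pair_le[of u w] \<kappa> by (smt (verit) mult_left_mono prod.inject)
  next
    fix y0 u c
    assume y0: "norm (y0 - xbar) \<le> 3 * r / 4"
      and sm: "2 * \<kappa> * (norm (u - G y0) + norm (c - H y0)) \<le> r / 8"
    have ball: "cball y0 (r/4) \<subseteq> cball xbar r"
    proof
      fix x assume "x \<in> cball y0 (r/4)"
      then have "dist xbar x \<le> dist xbar y0 + dist y0 x" "dist y0 x \<le> r/4" "dist xbar y0 \<le> 3 * r / 4"
        using dist_triangle[of xbar x y0] y0 by (auto simp: dist_norm norm_minus_commute)
      then show "x \<in> cball xbar r" by simp
    qed
    have err: "2 * \<kappa> * norm ((u, c) - ?F y0) \<le> 2 * \<kappa> * (norm (u - G y0) + norm (c - H y0))"
      using norm_Pair_le[of "u - G y0" "c - H y0"] \<kappa> by simp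
    then have "2 * \<kappa> * norm ((u, c) - ?F y0) \<le> r / 4" using sm r by linarith
    then obtain y where "?F y = (u, c)" "norm (y - y0) \<le> 2 * \<kappa> * norm ((u, c) - ?F y0)"
      using local_solution_near[OF F R \<kappa> small' ball] by blast
    with err show "\<exists>y. G y = u \<and> H y = c \<and> norm (y - y0) \<le> 2 * \<kappa> * (norm (u - G y0) + norm (c - H y0))"
      by auto
  qed (use assms in auto)
qed

lemma regular_constraint_system_near:
  fixes G :: "'a::euclidean_space \<Rightarrow> real^'n" and P :: "'a \<Rightarrow> real^'m" and H :: "'a \<Rightarrow> 'b::euclidean_space"
  assumes "C2_near G xbar" "C2_near P xbar" "C2_near H xbar"
    and "G xbar = 0" "\<forall>i. P xbar $ i < 0" "H xbar = 0"
    and LICQ: "\<forall>w y. adjoint (frechet_derivative G (at xbar)) w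
                     + adjoint (frechet_derivative H (at xbar)) y = 0 \<longrightarrow> w = 0 \<and> y = 0"
  obtains DG DP DH r B \<kappa> \<delta> where "regular_constraint_system G P H xbar DG DP DH r B \<kappa> \<delta>"
proof -
  obtain DG rG BG where rG: "rG > 0" and G: "deriv_bounded_lipschitz_on G DG (cball xbar rG) BG"
    using C2_near_imp_deriv_bounded_lipschitz[OF assms(1)] by blast
  obtain DP rP BP where rP: "rP > 0" and P: "deriv_bounded_lipschitz_on P DP (cball xbar rP) BP"
    using C2_near_imp_deriv_bounded_lipschitz[OF assms(2)] by blast
  obtain DH rH BH where rH: "rH > 0" and H: "deriv_bounded_lipschitz_on H DH (cball xbar rH) BH"
    using C2_near_imp_deriv_bounded_lipschitz[OF assms(3)] by blast
  define r0 where "r0 = min rG (min rP rH)"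
  define B where "B = BG + BP + BH + 1"
  have B: "B > 0" "BG \<le> B" "BP \<le> B" "BH \<le> B"
    using deriv_bounded_lipschitz_onD(1)[OF G] deriv_bounded_lipschitz_onD(1)[OF P]
      deriv_bounded_lipschitz_onD(1)[OF H] unfolding B_def by auto
  have "cball xbar r0 \<subseteq> cball xbar rG" "cball xbar r0 \<subseteq> cball xbar rP" "cball xbar r0 \<subseteq> cball xbar rH"
    unfolding r0_def by auto
  then have G0: "deriv_bounded_lipschitz_on G DG (cball xbar r0) B"
    and P0: "deriv_bounded_lipschitz_on P DP (cball xbar r0) B"
    and H0: "deriv_bounded_lipschitz_on H DH (cball xbar r0) B"
    using deriv_bounded_lipschitz_on_mono G P H B by blast+
  have xbar: "xbar \<in> cball xbar r0" unfolding r0_def using rG rP rH by simp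
  have "frechet_derivative G (at xbar) = DG xbar" "frechet_derivative H (at xbar) = DH xbar"
    using frechet_derivative_at deriv_bounded_lipschitz_onD(2) G0 H0 xbar by metis+
  then obtain R \<kappa> where R: "linear R" "\<And>w. (DG xbar (R w), DH xbar (R w)) = w"
    and \<kappa>: "\<kappa> > 0" "\<And>w. norm (R w) \<le> \<kappa> * norm w"
    using linear_right_inverse_of_adjoint_injective[OF deriv_bounded_lipschitz_on_linear[OF G0 xbar]
        deriv_bounded_lipschitz_on_linear[OF H0 xbar]] LICQ by metis
  have "isCont P xbar"
    using has_derivative_continuous deriv_bounded_lipschitz_onD(2)[OF P0 xbar] by blast
  then obtain \<delta> d where \<delta>: "\<delta> > 0" "d > 0" "\<And>x i. x \<in> cball xbar d \<Longrightarrow> P x $ i \<le> - \<delta>"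
    using uniformly_negative_near assms(5) by blast
  define r where "r = min (min r0 d) (1 / (12 * B * \<kappa>))"
  have r: "r > 0" "cball xbar r \<subseteq> cball xbar r0" "cball xbar r \<subseteq> cball xbar d"
    unfolding r_def using rG rP rH \<delta> B \<kappa> by (auto simp: r0_def)
  have "r \<le> 1 / (12 * B * \<kappa>)" unfolding r_def by simp
  then have "12 * B * \<kappa> * r \<le> 1" using B \<kappa> by (simp add: field_simps)
  from regular_constraint_system_of_right_inverse[OF r(1) B(1) \<delta>(1)
      deriv_bounded_lipschitz_on_mono[OF G0 r(2) order_refl]
      deriv_bounded_lipschitz_on_mono[OF P0 r(2) order_refl]
      deriv_bounded_lipschitz_on_mono[OF H0 r(2) order_refl] assms(4,6) _ R \<kappa>(2,1) this]
  show thesis using that \<delta>(3) r(3) by blast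
qed

theorem mainTheorem2:
  fixes G :: "'a::euclidean_space \<Rightarrow> real^'n"
    and P :: "'a \<Rightarrow> real^'m"
    and H :: "'a \<Rightarrow> 'b::euclidean_space"
    and xbar :: 'a
  assumes "C2_near G xbar" and "C2_near P xbar" and "C2_near H xbar"
    and "G xbar = 0" and "\<forall>i. P xbar $ i < 0" and "H xbar = 0"
    and LICQ: "\<forall>w y. adjoint (frechet_derivative G (at xbar)) w
                     + adjoint (frechet_derivative H (at xbar)) y = 0 \<longrightarrow> w = 0 \<and> y = 0"
  shows "(\<forall>\<^sub>F z in nhds xbar. \<exists>!x. qp_optimal G P H z x)
    \<and> inexact_projection (qp_Phi G P H) (constr_set G P H) xbar
    \<and> (\<forall>\<^sub>F z in nhds xbar. \<exists>!p. p \<in> nearest_points (constr_set G P H) z)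
    \<and> (\<lambda>z. norm (qp_Phi G P H z - (THE p. p \<in> nearest_points (constr_set G P H) z)))
         \<in> O[at xbar](\<lambda>z. (infdist z (constr_set G P H))^2)"
proof -
  obtain DG DP DH r B \<kappa> \<delta> where "regular_constraint_system G P H xbar DG DP DH r B \<kappa> \<delta>"
    using regular_constraint_system_near[OF assms] by blast
  then interpret regular_constraint_system G P H xbar DG DP DH r B \<kappa> \<delta> .
  have "\<forall>\<^sub>F z in nhds xbar. \<exists>!x. qp_optimal G P H z x"
    and "\<forall>\<^sub>F z in nhds xbar. \<exists>!p. p \<in> nearest_points M z"
    using local_quadratic_estimate by (auto elim!: eventually_mono)
  moreover have "\<forall>\<^sub>F z in nhds xbar. \<exists>p. nearest_points M z = {p} \<and>
      norm (qp_Phi G P H z - p) \<le> 6 * \<kappa> * B * (infdist z M)^2 \<and> infdist z M \<le> norm (z - xbar)"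
    using local_quadratic_estimate by (rule eventually_mono) blast
  ultimately show ?thesis using inexact_projection_of_quadratic_estimate by blast
qed

end
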